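(* Let $k\ge 1$. If $C$ is an odd cycle that is a strict prime $k$th-power distance graph, then every cycle with more vertices than $C$ is also a strict prime $k$th-power distance graph.
   Context: A graph $G$ is a strict prime $k$th-power distance graph if there is an injective map $L:V(G)\to\mathbb{Z}$ such that for every edge $uv$ of $G$, $|L(u)-L(v)|=p^k$ for some prime $p$ (the prime may depend on the edge). *)

theory Defs
  imports "HOL-Computational_Algebra.Primes"
begin

definition strict_prime_power_distance_graph ::
  "nat \<Rightarrow> 'a set \<Rightarrow> ('a \<Rightarrow> 'a \<Rightarrow> bool) \<Rightarrow> bool" where
  "strict_prime_power_distance_graph k V E \<longleftrightarrow>
     (\<exists>L :: 'a \<Rightarrow> int. inj_on L V \<and>
        (\<forall>u\<in>V. \<forall>v\<in>V. E u v \<longrightarrow>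
           (\<exists>p :: nat. prime p \<and> \<bar>L u - L v\<bar> = int p ^ k)))"

definition cycle_vertices :: "nat \<Rightarrow> nat set" where
  "cycle_vertices n = {..<n}"

definition cycle_edge :: "nat \<Rightarrow> nat \<Rightarrow> nat \<Rightarrow> bool" where
  "cycle_edge n i j \<longleftrightarrow> i < n \<and> j < n \<and> (j = Suc i mod n \<or> i = Suc j mod n)"

end

theory Submission
  imports Defs
begin

text \<open>Even cycles need no hypothesis: \<open>C\<^sub>2\<^sub>t\<close>, \<open>t \<ge> 2\<close>, is labelled by
  \<open>0, a, \<dots>, (t-1)a, (t-1)a + b, \<dots>, a + b, b\<close> with \<open>a = 2\<^sup>k\<close> and \<open>b = 3\<^sup>k\<close>; consecutive
  labels differ by \<open>a\<close> or \<open>b\<close>, and the two halves are told apart by parity. For odd cycles,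
  a labelling \<open>L\<close> of \<open>C\<^sub>n\<close> extends to \<open>C\<^sub>n\<^sub>+\<^sub>2\<close> by appending \<open>L(n-1) + Q\<close> and \<open>L(0) + Q\<close>,
  where \<open>Q = q\<^sup>k\<close> for a prime \<open>q\<close> so large that the new labels are fresh: the closing edge of
  \<open>C\<^sub>n\<close> reappears between the two new vertices. Iterating reaches every larger odd cycle.\<close>

lemma inj_on_Un_disjoint_images:
  assumes "inj_on f A" and "inj_on f B" and "f ` A \<inter> f ` B = {}"
  shows "inj_on f (A \<union> B)"
  using assms unfolding inj_on_Un by blast

definition prime_power_dist :: "nat \<Rightarrow> int \<Rightarrow> bool" where
  "prime_power_dist k x \<longleftrightarrow> (\<exists>p::nat. prime p \<and> \<bar>x\<bar> = int p ^ k)"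

lemma prime_power_dist_minus_commute:
  "prime_power_dist k (a - b) \<longleftrightarrow> prime_power_dist k (b - a)"
  unfolding prime_power_dist_def by (simp add: abs_minus_commute)

lemma prime_power_dist_prime_power:
  assumes "prime p"
  shows "prime_power_dist k (int p ^ k)" and "prime_power_dist k (- (int p ^ k))"
  unfolding prime_power_dist_def using assms by auto

lemma exists_prime_power_gt:
  assumes "k \<ge> 1"
  obtains q :: nat where "prime q" and "int q ^ k > B"
proof -
  obtain q :: nat where "prime q" and "q > nat B"
    using bigger_prime by blast
  moreover have "int q \<le> int q ^ k"
    using assms prime_gt_0_nat[OF \<open>prime q\<close>] by (intro self_le_power) auto
  ultimately show thesis
    using that by (metis le_less_trans nat_less_iff not_le of_nat_0_le_iff)
qed

definition prime_power_cycle_labelling :: "nat \<Rightarrow> nat \<Rightarrow> (nat \<Rightarrow> int) \<Rightarrow> bool" where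
  "prime_power_cycle_labelling k m L \<longleftrightarrow>
     inj_on L {..<m} \<and> (\<forall>i. Suc i < m \<longrightarrow> prime_power_dist k (L (Suc i) - L i)) \<and>
     prime_power_dist k (L (m - 1) - L 0)"

lemma cycle_edge_iff:
  assumes "m \<ge> 2"
  shows "cycle_edge m u v \<longleftrightarrow>
    (Suc u = v \<and> v < m) \<or> (Suc v = u \<and> u < m) \<or> (u = m - 1 \<and> v = 0) \<or> (u = 0 \<and> v = m - 1)"
proof -
  have "Suc i mod m = (if Suc i < m then Suc i else 0)" if "i < m" for i
  proof (cases "Suc i < m")
    case False
    with that have "Suc i = m" by simp
    then show ?thesis by simp
  qed simp
  then show ?thesis
    using assms unfolding cycle_edge_def by (cases "u < m"; cases "v < m") auto
qed

lemma cycle_edges_prime_power_dist_iff: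
  fixes L :: "nat \<Rightarrow> int"
  assumes "m \<ge> 2"
  shows "(\<forall>u<m. \<forall>v<m. cycle_edge m u v \<longrightarrow> prime_power_dist k (L u - L v)) \<longleftrightarrow>
    (\<forall>i. Suc i < m \<longrightarrow> prime_power_dist k (L (Suc i) - L i)) \<and>
    prime_power_dist k (L (m - 1) - L 0)"
proof
  assume edges: "\<forall>u<m. \<forall>v<m. cycle_edge m u v \<longrightarrow> prime_power_dist k (L u - L v)"
  have "prime_power_dist k (L (Suc i) - L i)" if "Suc i < m" for i
    using edges that by (simp add: cycle_edge_iff assms)
  moreover have "cycle_edge m (m - 1) 0"
    using assms by (simp add: cycle_edge_iff)
  then have "prime_power_dist k (L (m - 1) - L 0)"
    using edges[rule_format, of "m - 1" 0] assms by simp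
  ultimately show "(\<forall>i. Suc i < m \<longrightarrow> prime_power_dist k (L (Suc i) - L i)) \<and>
    prime_power_dist k (L (m - 1) - L 0)" by blast
next
  assume "(\<forall>i. Suc i < m \<longrightarrow> prime_power_dist k (L (Suc i) - L i)) \<and>
    prime_power_dist k (L (m - 1) - L 0)"
  then have path: "\<And>i. Suc i < m \<Longrightarrow> prime_power_dist k (L (Suc i) - L i)"
    and closing: "prime_power_dist k (L (m - 1) - L 0)" by auto
  show "\<forall>u<m. \<forall>v<m. cycle_edge m u v \<longrightarrow> prime_power_dist k (L u - L v)"
  proof (intro allI impI)
    fix u v assume "cycle_edge m u v"
    then consider "Suc u = v" "v < m" | "Suc v = u" "u < m" | "u = m - 1" "v = 0"
      | "u = 0" "v = m - 1"
      using assms cycle_edge_iff by blast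
    then show "prime_power_dist k (L u - L v)"
    proof cases
      case 1
      then show ?thesis using path[of u] prime_power_dist_minus_commute[of k "L u"] by auto
    next
      case 2
      then show ?thesis using path[of v] by auto
    next
      case 3
      then show ?thesis using closing by auto
    next
      case 4
      then show ?thesis using closing prime_power_dist_minus_commute[of k "L u"] by auto
    qed
  qed
qed

lemma strict_prime_power_distance_cycle_iff:
  assumes "m \<ge> 2"
  shows "strict_prime_power_distance_graph k (cycle_vertices m) (cycle_edge m) \<longleftrightarrow>
    (\<exists>L. prime_power_cycle_labelling k m L)"
proof -
  have "strict_prime_power_distance_graph k (cycle_vertices m) (cycle_edge m) \<longleftrightarrow>
    (\<exists>L. inj_on L {..<m} \<and>
      (\<forall>u<m. \<forall>v<m. cycle_edge m u v \<longrightarrow> prime_power_dist k (L u - L v)))"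
    unfolding strict_prime_power_distance_graph_def cycle_vertices_def prime_power_dist_def
      lessThan_iff Ball_def by (rule refl)
  then show ?thesis
    unfolding prime_power_cycle_labelling_def cycle_edges_prime_power_dist_iff[OF assms] by simp
qed

definition even_cycle_labelling :: "int \<Rightarrow> int \<Rightarrow> nat \<Rightarrow> nat \<Rightarrow> int" where
  "even_cycle_labelling a b t i = (if i < t then int i * a else int (2 * t - 1 - i) * a + b)"

lemma inj_on_even_cycle_labelling:
  assumes "even a" and "odd b" and "a > 0"
  shows "inj_on (even_cycle_labelling a b t) {..<2 * t}"
proof -
  let ?L = "even_cycle_labelling a b t"
  have parity: "even (?L i) \<longleftrightarrow> i < t" for i
    using assms(1,2) unfolding even_cycle_labelling_def by auto
  have separated: "?L i \<noteq> ?L j" if "i < t" and "t \<le> j" for i j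
    using parity[of i] parity[of j] that by (metis not_le)
  have "inj_on ?L {..<t}"
    using \<open>a > 0\<close> by (auto simp: inj_on_def even_cycle_labelling_def)
  moreover have "inj_on ?L {t..<2 * t}"
  proof (rule inj_onI)
    fix i j assume "i \<in> {t..<2 * t}" "j \<in> {t..<2 * t}" "?L i = ?L j"
    then have "2 * t - 1 - i = 2 * t - 1 - j"
      using \<open>a > 0\<close> by (simp add: even_cycle_labelling_def)
    then show "i = j"
      using \<open>i \<in> {t..<2 * t}\<close> \<open>j \<in> {t..<2 * t}\<close> by auto
  qed
  moreover have "?L ` {..<t} \<inter> ?L ` {t..<2 * t} = {}"
    using separated by (auto simp: disjoint_iff)
  ultimately have "inj_on ?L ({..<t} \<union> {t..<2 * t})"
    by (rule inj_on_Un_disjoint_images)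
  moreover have "{..<t} \<union> {t..<2 * t} = {..<2 * t}"
    by auto
  ultimately show ?thesis
    by simp
qed

lemma even_cycle_prime_power_labelling:
  assumes "k \<ge> 1" and "t \<ge> 2"
  shows "prime_power_cycle_labelling k (2 * t) (even_cycle_labelling (2 ^ k) (3 ^ k) t)"
proof -
  define a :: int where "a = 2 ^ k"
  define b :: int where "b = 3 ^ k"
  let ?L = "even_cycle_labelling a b t"
  have "inj_on ?L {..<2 * t}"
    using assms(1) by (intro inj_on_even_cycle_labelling) (auto simp: a_def b_def)
  moreover have steps: "prime_power_dist k a" "prime_power_dist k (- a)" "prime_power_dist k b"
    unfolding a_def b_def
    using prime_power_dist_prime_power[of 2 k] prime_power_dist_prime_power[of 3 k] by auto
  moreover have "prime_power_dist k (?L (Suc i) - ?L i)" if "Suc i < 2 * t" for i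
  proof -
    consider "Suc i < t" | "Suc i = t" | "t \<le> i" by linarith
    then show ?thesis
    proof cases
      case 1
      then have "?L (Suc i) - ?L i = a"
        by (simp add: even_cycle_labelling_def algebra_simps)
      then show ?thesis using steps by simp
    next
      case 2
      then have "2 * t - 1 - Suc i = i" by simp
      with 2 have "?L (Suc i) - ?L i = b"
        by (simp add: even_cycle_labelling_def)
      then show ?thesis using steps by simp
    next
      case 3
      then have "?L (Suc i) - ?L i = - a"
        using that by (simp add: even_cycle_labelling_def of_nat_diff algebra_simps)
      then show ?thesis using steps by simp
    qed
  qed
  moreover have "?L (2 * t - 1) - ?L 0 = b"
    using assms(2) by (simp add: even_cycle_labelling_def)
  ultimately show ?thesis
    unfolding prime_power_cycle_labelling_def a_def b_def by auto
qed

lemma prime_power_cycle_labelling_extend: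
  assumes "n \<ge> 2" and "prime_power_cycle_labelling k n L" and "prime_power_dist k Q"
    and fresh: "\<And>i j. i < n \<Longrightarrow> j < n \<Longrightarrow> L i + Q \<noteq> L j"
  shows "prime_power_cycle_labelling k (n + 2) (L(n := L (n - 1) + Q, Suc n := L 0 + Q))"
proof -
  let ?L = "L(n := L (n - 1) + Q, Suc n := L 0 + Q)"
  have inj: "inj_on L {..<n}"
    and path: "\<And>i. Suc i < n \<Longrightarrow> prime_power_dist k (L (Suc i) - L i)"
    and closing: "prime_power_dist k (L (n - 1) - L 0)"
    using assms(2) unfolding prime_power_cycle_labelling_def by auto
  have "n - 1 \<noteq> 0" and "n - 1 < n"
    using assms(1) by auto
  then have "L (n - 1) \<noteq> L 0"
    using inj inj_onD[of L "{..<n}" "n - 1" 0] by auto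
  have "inj_on ?L {..<n}"
    using inj by (auto simp: inj_on_def)
  moreover have "inj_on ?L {n, Suc n}"
    using \<open>L (n - 1) \<noteq> L 0\<close> by simp
  moreover have "?L ` {..<n} \<inter> ?L ` {n, Suc n} = {}"
    using fresh \<open>n - 1 < n\<close> assms(1) by auto
  moreover have "{..<n} \<union> {n, Suc n} = {..<n + 2}"
    by auto
  ultimately have "inj_on ?L {..<n + 2}"
    by (metis inj_on_Un_disjoint_images)
  moreover have "prime_power_dist k (?L (Suc i) - ?L i)" if i: "Suc i < n + 2" for i
  proof -
    consider "Suc i < n" | "Suc i = n" | "i = n"
      using i by linarith
    then show ?thesis
    proof cases
      case 1
      then show ?thesis using path by simp
    next
      case 2
      then have "?L (Suc i) - ?L i = Q" by auto
      then show ?thesis using assms(3) by simp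
    next
      case 3
      then show ?thesis
        using closing by (simp add: prime_power_dist_minus_commute)
    qed
  qed
  moreover have "?L (n + 2 - 1) - ?L 0 = Q"
    using assms(1) by simp
  ultimately show ?thesis
    unfolding prime_power_cycle_labelling_def using assms(3) by auto
qed

lemma prime_power_cycle_labelling_add_two:
  assumes "k \<ge> 1" and "n \<ge> 2" and "prime_power_cycle_labelling k n L"
  shows "\<exists>L'. prime_power_cycle_labelling k (n + 2) L'"
proof -
  define M where "M = (\<Sum>i<n. \<bar>L i\<bar>)"
  have bound: "\<bar>L i\<bar> \<le> M" if "i < n" for i
    unfolding M_def using that by (intro member_le_sum) auto
  obtain q :: nat where "prime q" and "int q ^ k > 2 * M"
    using exists_prime_power_gt[OF assms(1)] .
  then have "L i + int q ^ k \<noteq> L j" if "i < n" and "j < n" for i j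
    using bound[OF that(1)] bound[OF that(2)] by linarith
  then show ?thesis
    using prime_power_cycle_labelling_extend[OF assms(2,3)]
      prime_power_dist_prime_power(1)[OF \<open>prime q\<close>] by blast
qed

lemma prime_power_cycle_labelling_add_even:
  assumes "k \<ge> 1" and "n \<ge> 2" and "prime_power_cycle_labelling k n L"
  shows "\<exists>L'. prime_power_cycle_labelling k (n + 2 * j) L'"
proof (induction j)
  case 0
  then show ?case using assms(3) by auto
next
  case (Suc j)
  then obtain L' where "prime_power_cycle_labelling k (n + 2 * j) L'" by blast
  then have "\<exists>L''. prime_power_cycle_labelling k (n + 2 * j + 2) L''"
    using prime_power_cycle_labelling_add_two[OF assms(1)] assms(2) by simp
  then show ?case by simp
qed

theorem mainTheorem14:
  fixes k n m :: nat
  assumes "k \<ge> 1"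
    and "n \<ge> 3" and "odd n"
    and "strict_prime_power_distance_graph k (cycle_vertices n) (cycle_edge n)"
    and "m > n"
  shows "strict_prime_power_distance_graph k (cycle_vertices m) (cycle_edge m)"
proof -
  have "n \<ge> 2" and "m \<ge> 2"
    using assms(2,5) by auto
  have "\<exists>L. prime_power_cycle_labelling k m L"
  proof (cases "even m")
    case True
    then obtain t where "m = 2 * t" by blast
    moreover have "t \<ge> 2" using \<open>m = 2 * t\<close> assms(2,5) by linarith
    ultimately show ?thesis
      using even_cycle_prime_power_labelling[OF assms(1)] by auto
  next
    case False
    then have "even (m - n)" using assms(3,5) by simp
    then obtain j where "m - n = 2 * j" by blast
    then have "m = n + 2 * j" using assms(5) by simp
    moreover obtain L where "prime_power_cycle_labelling k n L"
      using assms(4) strict_prime_power_distance_cycle_iff[OF \<open>n \<ge> 2\<close>] by blast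
    ultimately show ?thesis
      using prime_power_cycle_labelling_add_even[OF assms(1) \<open>n \<ge> 2\<close>] by blast
  qed
  then show ?thesis
    using strict_prime_power_distance_cycle_iff[OF \<open>m \<ge> 2\<close>] by blast
qed

end
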